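(* Let $(\mathcal A,\phi)$ be a noncommutative probability space and let $B,C\subseteq\mathcal A$ have the cluster property. Then for all $j>0$, $k>0$, $b_1,\dots,b_j\in B$ and $c_1,\dots,c_k\in C$, $$\kappa_{j+k}[b_1,\dots,b_j,c_1,\dots,c_k]=0.$$
   Context: A noncommutative probability space is a pair $(\mathcal A,\phi)$ with $\mathcal A$ a unital algebra over $\mathbb{C}$ and $\phi$ a linear form on $\mathcal A$ with $\phi(1)=1$. Two subsets $B,C\subseteq\mathcal A$ have the cluster property if $\phi(b_1\cdots b_jc_1\cdots c_k)=\phi(b_1\cdots b_j)\,\phi(c_1\cdots c_k)$ for all $b_1,\dots,b_j\in B$ and $c_1,\dots,c_k\in C$. A reduced plane tree is a rooted plane tree in which every internal node has at least two children; its weight is its number of leaves minus 1, and $i(t)$ is its number of internal nodes. It is prime if it has at least two leaves and the rightmost child of its root is a leaf; $\mathrm{PST}_n$ is the set of prime reduced plane trees of weight $n$. For $t$ with leaves $\ell_1,\dots,\ell_{n+1}$ from left to right, an internal vertex $v$ has a clear view to the $i$th sector ($1\le i\le n$), written $v\measuredangle i$, iff $v$ is the lowest common ancestor of $\ell_i$ and $\ell_{i+1}$. For $a_1,\dots,a_n\in\mathcal A$, $$\kappa_n[a_1,\dots,a_n]=\sum_{t\in\mathrm{PST}_n}(-1)^{i(t)-1}\prod_{v\text{ internal vertex of }t}\phi\Big(\prod_{v\measuredangle i}a_i\Big),$$ where the inner product is taken in increasing order of $i$. *)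

theory Defs
  imports Complex_Main
begin

definition unital_C_algebra :: "(complex \<Rightarrow> 'a::ring_1 \<Rightarrow> 'a) \<Rightarrow> bool" where
  "unital_C_algebra scale \<longleftrightarrow>
     vector_space scale \<and>
     (\<forall>c x y. scale c (x * y) = scale c x * y) \<and>
     (\<forall>c x y. scale c (x * y) = x * scale c y)"

definition nc_prob_space :: "(complex \<Rightarrow> 'a::ring_1 \<Rightarrow> 'a) \<Rightarrow> ('a \<Rightarrow> complex) \<Rightarrow> bool" where
  "nc_prob_space scale phi \<longleftrightarrow>
     unital_C_algebra scale \<and> Vector_Spaces.linear scale (*) phi \<and> phi 1 = 1"

definition cluster_property :: "('a::ring_1 \<Rightarrow> complex) \<Rightarrow> 'a set \<Rightarrow> 'a set \<Rightarrow> bool" where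
  "cluster_property phi B C \<longleftrightarrow>
     (\<forall>bs cs. set bs \<subseteq> B \<longrightarrow> set cs \<subseteq> C \<longrightarrow>
        phi (prod_list bs * prod_list cs) = phi (prod_list bs) * phi (prod_list cs))"

datatype ptree = Leaf | Node "ptree list"

fun reduced :: "ptree \<Rightarrow> bool" where
  "reduced Leaf = True"
| "reduced (Node ts) = (length ts \<ge> 2 \<and> (\<forall>t\<in>set ts. reduced t))"

fun num_leaves :: "ptree \<Rightarrow> nat" where
  "num_leaves Leaf = 1"
| "num_leaves (Node ts) = sum_list (map num_leaves ts)"

fun num_internal :: "ptree \<Rightarrow> nat" where
  "num_internal Leaf = 0"
| "num_internal (Node ts) = 1 + sum_list (map num_internal ts)"

definition weight :: "ptree \<Rightarrow> nat" where
  "weight t = num_leaves t - 1"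

definition prime_tree :: "ptree \<Rightarrow> bool" where
  "prime_tree t \<longleftrightarrow> num_leaves t \<ge> 2 \<and>
     (case t of Leaf \<Rightarrow> False | Node ts \<Rightarrow> ts \<noteq> [] \<and> last ts = Leaf)"

definition PST :: "nat \<Rightarrow> ptree set" where
  "PST n = {t. reduced t \<and> prime_tree t \<and> weight t = n}"

text \<open>Vertices are addressed by paths (lists of child indices) from the root.\<close>

fun subtree_at :: "ptree \<Rightarrow> nat list \<Rightarrow> ptree option" where
  "subtree_at t [] = Some t"
| "subtree_at Leaf (i # p) = None"
| "subtree_at (Node ts) (i # p) = (if i < length ts then subtree_at (ts ! i) p else None)"

definition internal_vertices :: "ptree \<Rightarrow> nat list set" where
  "internal_vertices t = {p. \<exists>ts. subtree_at t p = Some (Node ts)}"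

function (sequential) leaf_paths :: "ptree \<Rightarrow> nat list list" where
  "leaf_paths Leaf = [[]]"
| "leaf_paths (Node ts) =
     concat (map (\<lambda>(i, s). map (Cons i) (leaf_paths s)) (zip [0..<length ts] ts))"
  by pat_completeness auto
termination
  by (relation "measure size") (auto dest!: set_zip_rightD simp: less_Suc_eq_le intro: size_list_estimation')

text \<open>Lowest common ancestor of two vertices = longest common prefix of their paths.\<close>
fun lcp :: "nat list \<Rightarrow> nat list \<Rightarrow> nat list" where
  "lcp (x # xs) (y # ys) = (if x = y then x # lcp xs ys else [])"
| "lcp _ _ = []"

text \<open>Vertex v has a clear view to sector i (1 \<le> i \<le> n) iff it is the lowest common ancestor
  of leaves l_i and l_(i+1) (leaves numbered from 1).\<close>
definition clear_view :: "ptree \<Rightarrow> nat list \<Rightarrow> nat \<Rightarrow> bool" where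
  "clear_view t v i \<longleftrightarrow> lcp (leaf_paths t ! (i - 1)) (leaf_paths t ! i) = v"

text \<open>Free cumulant kappa_n[a_1,...,a_n], with a_i = as ! (i - 1) and n = length as.\<close>
definition kappa :: "('a::ring_1 \<Rightarrow> complex) \<Rightarrow> 'a list \<Rightarrow> complex" where
  "kappa phi as =
     (let n = length as in
      \<Sum>t\<in>PST n. (-1) ^ (num_internal t - 1) *
        (\<Prod>v\<in>internal_vertices t.
           phi (prod_list (map (\<lambda>i. as ! (i - 1)) (filter (clear_view t v) [1..<n+1])))))"

end

theory Submission
  imports Defs "HOL-Library.Disjoint_Sets"
begin

text \<open>
  The trees of \<open>PST (j + k)\<close> cancel in pairs. Sector \<open>j\<close> separates the letters \<open>b\<close> from
  the letters \<open>c\<close>. Walk from the root towards leaf \<open>j + 1\<close> and stop at the first vertex whose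
  child \<open>s\<close> containing that leaf either has siblings on both sides (then group \<open>s\<close> and its
  left siblings under a new vertex) or is the first child and contains the leaf in its own last
  child (then ungroup \<open>s\<close>). This involution changes the number of internal vertices by one,
  hence the sign of the term. The sector word of the vertex being split has the form
  \<open>b\<dots>b c\<dots>c\<close>, and the cluster property factors its moment into the moments of the two
  vertices it is split into, so the product of moments is unchanged.
\<close>

section \<open>Locating leaves in a forest\<close>

abbreviation forest_leaves :: "ptree list \<Rightarrow> nat" where
  "forest_leaves ts \<equiv> sum_list (map num_leaves ts)"

lemma num_leaves_pos: "reduced t \<Longrightarrow> 0 < num_leaves t"
proof (induction t)
  case (Node ts)
  then have "hd ts \<in> set ts" by (intro hd_in_set) auto
  with Node have "0 < num_leaves (hd ts)" by simp
  with \<open>hd ts \<in> set ts\<close> show ?case by (simp add: member_le_sum_list order_less_le_trans)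
qed simp

lemma forest_leaves_pos: "\<forall>t\<in>set ts. 0 < num_leaves t \<Longrightarrow> ts \<noteq> [] \<Longrightarrow> 0 < forest_leaves ts"
  by (cases ts) auto

definition leaf_offset :: "ptree list \<Rightarrow> nat \<Rightarrow> nat" where
  "leaf_offset ts i = forest_leaves (take i ts)"

lemma leaf_offset_0 [simp]: "leaf_offset ts 0 = 0"
  by (simp add: leaf_offset_def)

lemma leaf_offset_Cons_Suc [simp]: "leaf_offset (t # ts) (Suc i) = num_leaves t + leaf_offset ts i"
  by (simp add: leaf_offset_def)

lemma leaf_offset_Suc:
  "i < length ts \<Longrightarrow> leaf_offset ts (Suc i) = leaf_offset ts i + num_leaves (ts ! i)"
  by (simp add: leaf_offset_def take_Suc_conv_app_nth)

lemma leaf_offset_mono: "i \<le> i' \<Longrightarrow> leaf_offset ts i \<le> leaf_offset ts i'"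
  by (auto simp: leaf_offset_def take_add dest!: le_Suc_ex)

lemma leaf_offset_le_forest_leaves: "leaf_offset ts i \<le> forest_leaves ts"
  by (metis leaf_offset_def leaf_offset_mono nat_le_linear take_all)

lemma leaf_offset_cover:
  assumes "k < forest_leaves ts"
  obtains i r where "i < length ts" "r < num_leaves (ts ! i)" "k = leaf_offset ts i + r"
  using assms
proof (induction ts arbitrary: k thesis)
  case (Cons t ts)
  show ?case
  proof (cases "k < num_leaves t")
    case True
    then show ?thesis using Cons.prems(1)[of 0 k] by simp
  next
    case False
    then have "k - num_leaves t < forest_leaves ts" using Cons.prems(2) by simp
    then obtain i r where "i < length ts" "r < num_leaves (ts ! i)"
        "k - num_leaves t = leaf_offset ts i + r"
      using Cons.IH by blast
    then show ?thesis using Cons.prems(1)[of "Suc i" r] False by simp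
  qed
qed simp

lemma leaf_offset_strict_mono:
  assumes "\<forall>t\<in>set ts. 0 < num_leaves t" "i < i'" "i' \<le> length ts"
  shows "leaf_offset ts i < leaf_offset ts i'"
proof -
  have "0 < num_leaves (ts ! i)" using assms by simp
  then have "leaf_offset ts i < leaf_offset ts (Suc i)" using assms by (simp add: leaf_offset_Suc)
  also have "\<dots> \<le> leaf_offset ts i'" using assms(2) by (simp add: leaf_offset_mono)
  finally show ?thesis .
qed

section \<open>The sector flip\<close>

fun split_forest :: "nat \<Rightarrow> ptree list \<Rightarrow> ptree list \<times> ptree \<times> ptree list \<times> nat" where
  "split_forest j [] = ([], Leaf, [], 0)"
| "split_forest j (t # ts) = (if j < num_leaves t then ([], t, ts, j)
     else case split_forest (j - num_leaves t) ts of (L, s, R, j') \<Rightarrow> (t # L, s, R, j'))"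

lemma split_forest_append:
  "forest_leaves L \<le> j \<Longrightarrow> j < forest_leaves L + num_leaves s \<Longrightarrow>
     split_forest j (L @ s # R) = (L, s, R, j - forest_leaves L)"
  by (induction L arbitrary: j) auto

lemma split_forest_child: "split_forest j ts = (L, s, R, j') \<Longrightarrow> s \<in> set ts \<or> s = Leaf"
  by (induction ts arbitrary: j L) (auto split: if_splits prod.splits)

lemma forest_leaf_decomposition:
  assumes "j < forest_leaves ts"
  obtains L s R where "ts = L @ s # R" "forest_leaves L \<le> j" "j < forest_leaves L + num_leaves s"
proof -
  obtain i r where "i < length ts" "r < num_leaves (ts ! i)" "j = leaf_offset ts i + r"
    using leaf_offset_cover[OF assms] .
  then show thesis
    using that[of "take i ts" "ts ! i" "drop (Suc i) ts"] id_take_nth_drop[of i ts]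
    by (simp add: leaf_offset_def)
qed

definition in_last_child :: "nat \<Rightarrow> ptree \<Rightarrow> bool" where
  "in_last_child j t \<longleftrightarrow> (\<exists>L s. t = Node (L @ [s]) \<and> forest_leaves L \<le> j)"

lemma in_last_child_Node:
  assumes "forest_leaves L \<le> j" "j < forest_leaves L + num_leaves s"
  shows "in_last_child j (Node (L @ s # R)) \<longleftrightarrow> R = []"
proof
  assume "in_last_child j (Node (L @ s # R))"
  then obtain L' s' where eq: "L @ s # R = L' @ [s']" and le: "forest_leaves L' \<le> j"
    by (auto simp: in_last_child_def)
  show "R = []"
  proof (rule ccontr)
    assume "R \<noteq> []"
    then have "L' = L @ s # butlast R" using eq
      by (metis append_butlast_last_id append_Cons append_assoc butlast_snoc)
    then show False using le assms(2) by simp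
  qed
qed (use assms in \<open>auto simp: in_last_child_def\<close>)

fun children :: "ptree \<Rightarrow> ptree list" where
  "children Leaf = []"
| "children (Node ts) = ts"

text \<open>Here \<open>j\<close> is the \<open>0\<close>-based index of the leaf to the right of sector \<open>j\<close>;
  \<open>split_forest j ts = (L, s, R, j')\<close> finds it as leaf \<open>j'\<close> of the root child \<open>s\<close>, with
  siblings \<open>L\<close> on its left and \<open>R\<close> on its right. For \<open>j > 0\<close>, the root sees sector \<open>j\<close>
  iff \<open>j' = 0\<close>.\<close>

function sector_flip :: "nat \<Rightarrow> ptree \<Rightarrow> ptree" where
  "sector_flip j Leaf = Leaf"
| "sector_flip j (Node ts) = (case split_forest j ts of (L, s, R, j') \<Rightarrow>
     if L \<noteq> [] \<and> R \<noteq> [] then Node (Node (L @ [s]) # R)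
     else if L = [] \<and> R \<noteq> [] \<and> in_last_child j s then Node (children s @ R)
     else if j' = 0 then Node ts
     else Node (L @ sector_flip j' s # R))"
  by pat_completeness auto
termination
  by (relation "measure (size \<circ> snd)")
    (auto dest!: split_forest_child[OF sym] intro: size_list_estimation'[OF _ order_refl]
      simp: less_Suc_eq_le)

lemma sector_flip_group:
  assumes "L \<noteq> []" "R \<noteq> []" "forest_leaves L \<le> j" "j < forest_leaves L + num_leaves s"
  shows "sector_flip j (Node (L @ s # R)) = Node (Node (L @ [s]) # R)"
  using assms by (simp add: split_forest_append)

lemma sector_flip_ungroup:
  assumes "R \<noteq> []" "forest_leaves L \<le> j" "j < forest_leaves L + num_leaves s"
  shows "sector_flip j (Node (Node (L @ [s]) # R)) = Node (L @ s # R)"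
proof -
  have "split_forest j (Node (L @ [s]) # R) = ([], Node (L @ [s]), R, j)"
    using split_forest_append[of "[]" j "Node (L @ [s])" R] assms by simp
  moreover have "in_last_child j (Node (L @ [s]))"
    using assms by (auto simp: in_last_child_def)
  ultimately show ?thesis using assms by simp
qed

lemma sector_flip_boundary:
  assumes "0 < num_leaves s"
  shows "sector_flip (forest_leaves L) (Node (L @ [s])) = Node (L @ [s])"
  using assms split_forest_append[of L "forest_leaves L" s "[]"] by simp

lemma sector_flip_descend:
  assumes "0 < j" "j < num_leaves s" "R = [] \<or> L = [] \<and> \<not> in_last_child j s"
  shows "sector_flip (forest_leaves L + j) (Node (L @ s # R)) = Node (L @ sector_flip j s # R)"
  using assms split_forest_append[of L "forest_leaves L + j" s R] by auto

declare sector_flip.simps(2) [simp del]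

lemma sector_flip_Node_cases:
  assumes "0 < j" "j < forest_leaves ts"
  obtains
    (group) L s R where "ts = L @ s # R" "L \<noteq> []" "R \<noteq> []"
      "forest_leaves L \<le> j" "j < forest_leaves L + num_leaves s"
  | (ungroup) L s R where "ts = Node (L @ [s]) # R" "R \<noteq> []"
      "forest_leaves L \<le> j" "j < forest_leaves L + num_leaves s"
  | (boundary) L s where "ts = L @ [s]" "j = forest_leaves L" "0 < num_leaves s"
  | (descend) L s R j' where "ts = L @ s # R" "0 < j'" "j' < num_leaves s"
      "j = forest_leaves L + j'" "R = [] \<or> L = [] \<and> \<not> in_last_child j' s"
proof -
  obtain L s R where ts: "ts = L @ s # R"
    and j: "forest_leaves L \<le> j" "j < forest_leaves L + num_leaves s"
    using forest_leaf_decomposition[OF assms(2)] by blast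
  define j' where "j' = j - forest_leaves L"
  consider "L \<noteq> [] \<and> R \<noteq> []" | "L = [] \<and> R \<noteq> [] \<and> in_last_child j s"
    | "j' = 0" "\<not> (L \<noteq> [] \<and> R \<noteq> [])" | "0 < j'" "R = [] \<or> L = [] \<and> \<not> in_last_child j' s"
    unfolding j'_def by fastforce
  then show thesis
  proof cases
    case 1 then show ?thesis using group ts j by blast
  next
    case 2
    then obtain L' s' where "s = Node (L' @ [s'])" "forest_leaves L' \<le> j"
      by (auto simp: in_last_child_def)
    then show ?thesis using ungroup[of L' s' R] 2 ts j by simp
  next
    case 3
    then have "R = []" using j assms(1) unfolding j'_def by (cases L) auto
    then show ?thesis using boundary[of L s] 3 ts j unfolding j'_def by auto
  next
    case 4
    then show ?thesis using descend[of L s R j'] ts j unfolding j'_def by auto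
  qed
qed

lemma num_leaves_sector_flip:
  "0 < j \<Longrightarrow> j < num_leaves t \<Longrightarrow> num_leaves (sector_flip j t) = num_leaves t"
proof (induction t arbitrary: j)
  case (Node ts)
  from Node.prems have "0 < j" "j < forest_leaves ts" by simp_all
  then show ?case
  proof (cases rule: sector_flip_Node_cases)
    case (descend L s R j')
    then show ?thesis using Node.IH[of s j'] sector_flip_descend[of j' s R L] by simp
  qed (simp_all add: sector_flip_group sector_flip_ungroup sector_flip_boundary)
qed simp

lemma reduced_sector_flip:
  "reduced t \<Longrightarrow> 0 < j \<Longrightarrow> j < num_leaves t \<Longrightarrow> reduced (sector_flip j t)"
proof (induction t arbitrary: j)
  case (Node ts)
  from Node.prems have "0 < j" "j < forest_leaves ts" by simp_all
  then show ?case
  proof (cases rule: sector_flip_Node_cases)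
    case (group L s R)
    then have "sector_flip j (Node ts) = Node (Node (L @ [s]) # R)" by (simp add: sector_flip_group)
    then show ?thesis using group Node.prems(1) by (auto simp: Suc_le_eq)
  next
    case (ungroup L s R)
    then show ?thesis using Node.prems(1) by (cases R) (auto simp: sector_flip_ungroup)
  next
    case (descend L s R j')
    then show ?thesis using Node.IH[of s j'] Node.prems(1) sector_flip_descend[of j' s R L] by auto
  qed (use Node.prems(1) in \<open>simp add: sector_flip_boundary\<close>)
qed simp

lemma in_last_child_sector_flip:
  assumes "0 < j" "j < num_leaves t"
  shows "in_last_child j (sector_flip j t) \<longleftrightarrow> in_last_child j t"
proof (cases t)
  case (Node ts)
  from assms have "0 < j" "j < forest_leaves ts" using Node by simp_all
  then show ?thesis
  proof (cases rule: sector_flip_Node_cases)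
    case (group L s R)
    then show ?thesis using Node in_last_child_Node[of "[]" j "Node (L @ [s])" R]
      by (simp add: sector_flip_group in_last_child_Node)
  next
    case (ungroup L s R)
    then show ?thesis using Node in_last_child_Node[of "[]" j "Node (L @ [s])" R]
      by (simp add: sector_flip_ungroup in_last_child_Node)
  next
    case (descend L s R j')
    then show ?thesis using Node sector_flip_descend[of j' s R L] num_leaves_sector_flip[of j' s]
      by (simp add: in_last_child_Node)
  qed (simp add: Node sector_flip_boundary)
qed (use assms in simp)

lemma num_internal_sector_flip:
  "0 < j \<Longrightarrow> j < num_leaves t \<Longrightarrow> \<not> in_last_child j t \<Longrightarrow>
     num_internal (sector_flip j t) = Suc (num_internal t) \<or>
     Suc (num_internal (sector_flip j t)) = num_internal t"
proof (induction t arbitrary: j)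
  case (Node ts)
  from Node.prems have "0 < j" "j < forest_leaves ts" by simp_all
  then show ?case
  proof (cases rule: sector_flip_Node_cases)
    case (group L s R)
    then show ?thesis by (simp add: sector_flip_group)
  next
    case (ungroup L s R)
    then show ?thesis by (simp add: sector_flip_ungroup)
  next
    case (boundary L s)
    then show ?thesis using Node.prems(3) by (auto simp: in_last_child_def)
  next
    case (descend L s R j')
    then have "L = [] \<and> \<not> in_last_child j' s"
      using Node.prems(3) in_last_child_Node[of L j s R] by auto
    then show ?thesis using descend Node.IH[of s j'] sector_flip_descend[of j' s R L] by auto
  qed
qed simp

lemma sector_flip_sector_flip:
  "reduced t \<Longrightarrow> 0 < j \<Longrightarrow> j < num_leaves t \<Longrightarrow> sector_flip j (sector_flip j t) = t"
proof (induction t arbitrary: j)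
  case (Node ts)
  from Node.prems have "0 < j" "j < forest_leaves ts" by simp_all
  then show ?case
  proof (cases rule: sector_flip_Node_cases)
    case (group L s R)
    then show ?thesis by (simp add: sector_flip_group sector_flip_ungroup)
  next
    case (ungroup L s R)
    then have "L \<noteq> []" using Node.prems(1) by auto
    with ungroup show ?thesis by (simp add: sector_flip_group sector_flip_ungroup)
  next
    case (boundary L s)
    then show ?thesis by (simp add: sector_flip_boundary)
  next
    case (descend L s R j')
    have s: "reduced s" "s \<in> set ts" using descend Node.prems(1) by auto
    have "R = [] \<or> L = [] \<and> \<not> in_last_child j' (sector_flip j' s)"
      using descend in_last_child_sector_flip[of j' s] by auto
    then show ?thesis
      using descend Node.IH[OF s(2,1)] num_leaves_sector_flip[of j' s]
        sector_flip_descend[of j' s R L] sector_flip_descend[of j' "sector_flip j' s" R L]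
      by simp
  qed
qed simp

lemma sector_flip_keeps_last_child:
  assumes "0 < j" "j < forest_leaves ts" "\<not> in_last_child j (Node ts)"
  obtains ts' where "sector_flip j (Node ts) = Node ts'" "ts' \<noteq> []" "last ts' = last ts"
  using assms(1,2)
proof (cases rule: sector_flip_Node_cases)
  case (boundary L s)
  then show ?thesis using assms(3) by (auto simp: in_last_child_def)
next
  case (descend L s R j')
  then have "R \<noteq> []" using assms(3) in_last_child_Node[of L j s R] by auto
  then show ?thesis using descend that sector_flip_descend[of j' s R L] by simp
qed (use that in \<open>simp_all add: sector_flip_group sector_flip_ungroup\<close>)

lemma not_in_last_child_prime_tree:
  assumes "prime_tree t" "Suc j < num_leaves t"
  shows "\<not> in_last_child j t"
proof
  assume "in_last_child j t"
  then obtain L s where "t = Node (L @ [s])" "forest_leaves L \<le> j"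
    by (auto simp: in_last_child_def)
  then show False using assms by (simp add: prime_tree_def)
qed

lemma sector_flip_PST:
  assumes "t \<in> PST n" "0 < j" "j < n"
  shows "sector_flip j t \<in> PST n" "sector_flip j (sector_flip j t) = t"
    "num_internal (sector_flip j t) = Suc (num_internal t) \<or>
     Suc (num_internal (sector_flip j t)) = num_internal t"
proof -
  obtain ts where t: "t = Node ts" "reduced t" "prime_tree t" "num_leaves t = Suc n"
    using assms(1) by (cases t) (auto simp: PST_def weight_def prime_tree_def)
  then have j: "0 < j" "j < num_leaves t" "\<not> in_last_child j t"
    using assms(2,3) not_in_last_child_prime_tree by auto
  then obtain ts' where "sector_flip j t = Node ts'" "ts' \<noteq> []" "last ts' = last ts"
    using t(1) sector_flip_keeps_last_child by auto
  moreover have "reduced (sector_flip j t)" "num_leaves (sector_flip j t) = Suc n"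
    using t j reduced_sector_flip num_leaves_sector_flip by auto
  ultimately show "sector_flip j t \<in> PST n"
    using t(1,3) assms(2,3) by (simp add: PST_def prime_tree_def weight_def)
  show "sector_flip j (sector_flip j t) = t" using t j sector_flip_sector_flip by blast
  show "num_internal (sector_flip j t) = Suc (num_internal t) \<or>
      Suc (num_internal (sector_flip j t)) = num_internal t"
    using j num_internal_sector_flip by blast
qed

section \<open>Sector words\<close>

lemma leaf_paths_Node:
  "leaf_paths (Node ts) = concat (map (\<lambda>i. map (Cons i) (leaf_paths (ts ! i))) [0..<length ts])"
proof -
  have "map (\<lambda>(i, s). map (Cons i) (leaf_paths s)) (zip [0..<length ts] ts)
      = map (\<lambda>i. map (Cons i) (leaf_paths (ts ! i))) [0..<length ts]"
    by (rule nth_equalityI) auto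
  then show ?thesis by simp
qed

lemma length_leaf_paths: "length (leaf_paths t) = num_leaves t"
proof (induction t)
  case (Node ts)
  have "length (leaf_paths (Node ts)) = (\<Sum>i\<leftarrow>[0..<length ts]. length (leaf_paths (ts ! i)))"
    by (simp del: leaf_paths.simps add: leaf_paths_Node length_concat comp_def)
  also have "\<dots> = (\<Sum>i\<leftarrow>[0..<length ts]. num_leaves (ts ! i))"
    using Node.IH by (intro arg_cong[where f = sum_list] map_cong) auto
  also have "map (\<lambda>i. num_leaves (ts ! i)) [0..<length ts] = map num_leaves ts"
    by (rule nth_equalityI) auto
  finally show ?case by simp
qed simp

lemma nth_concat_map_upt:
  assumes "i < m" "r < length (f i)"
  shows "concat (map f [0..<m]) ! ((\<Sum>k\<leftarrow>[0..<i]. length (f k)) + r) = f i ! r"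
proof -
  have "[0..<m] = [0..<i] @ i # [Suc i..<m]"
    using assms(1) upt_add_eq_append[of 0 i "m - i"] upt_conv_Cons[of i m] by simp
  then show ?thesis using assms(2) by (simp add: nth_append length_concat comp_def)
qed

lemma nth_leaf_paths_Node:
  assumes "i < length ts" "r < num_leaves (ts ! i)"
  shows "leaf_paths (Node ts) ! (leaf_offset ts i + r) = i # leaf_paths (ts ! i) ! r"
proof -
  have "map (\<lambda>k. num_leaves (ts ! k)) [0..<i] = map num_leaves (take i ts)"
    using assms(1) by (intro nth_equalityI) auto
  then have "(\<Sum>k\<leftarrow>[0..<i]. length (map (Cons k) (leaf_paths (ts ! k)))) = leaf_offset ts i"
    by (simp add: length_leaf_paths leaf_offset_def)
  then show ?thesis
    using nth_concat_map_upt[of i "length ts" r "\<lambda>i. map (Cons i) (leaf_paths (ts ! i))"] assms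
    by (simp del: leaf_paths.simps add: leaf_paths_Node length_leaf_paths)
qed

lemma clear_view_Node:
  assumes "i < length ts" "r < num_leaves (ts ! i)" "k = leaf_offset ts i + r" "0 < k"
  shows "clear_view (Node ts) v k \<longleftrightarrow>
    (if r = 0 then v = [] else \<exists>p. v = i # p \<and> clear_view (ts ! i) p r)"
proof (cases "r = 0")
  case True
  have "k - 1 < forest_leaves ts"
    using assms True leaf_offset_le_forest_leaves[of ts i] by simp
  then obtain i' r' where i': "i' < length ts" "r' < num_leaves (ts ! i')"
      "k - 1 = leaf_offset ts i' + r'"
    by (rule leaf_offset_cover)
  have "i' \<noteq> i"
  proof
    assume "i' = i"
    then have "leaf_offset ts i - 1 = leaf_offset ts i + r'" using i'(3) assms(3) True by simp
    then show False using assms(3,4) True by linarith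
  qed
  then show ?thesis
    using True assms i' nth_leaf_paths_Node[OF assms(1,2)] nth_leaf_paths_Node[OF i'(1,2)]
    by (auto simp: clear_view_def)
next
  case False
  then have "k - 1 = leaf_offset ts i + (r - 1)" using assms(3) by simp
  then show ?thesis
    using False assms nth_leaf_paths_Node[OF assms(1,2)] nth_leaf_paths_Node[OF assms(1), of "r - 1"]
    by (auto simp: clear_view_def)
qed

fun root_sectors :: "ptree list \<Rightarrow> nat list" where
  "root_sectors [] = []"
| "root_sectors (t # ts) =
     (if ts = [] then [] else num_leaves t # map ((+) (num_leaves t)) (root_sectors ts))"

lemma root_sectors_conv_leaf_offset: "root_sectors ts = map (leaf_offset ts) [1..<length ts]"
proof (induction ts)
  case (Cons t ts)
  show ?case
  proof (cases "ts = []")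
    case False
    then have "0 < length ts" by simp
    then have "[1..<length (t # ts)] = 1 # map Suc [1..<length ts]"
      by (simp add: map_Suc_upt upt_conv_Cons del: upt_Suc)
    then show ?thesis using Cons.IH False by simp
  qed simp
qed simp

lemma root_sectors_bounds:
  assumes "\<forall>t\<in>set ts. 0 < num_leaves t" "k \<in> set (root_sectors ts)"
  shows "0 < k" "k < forest_leaves ts"
proof -
  obtain m where m: "1 \<le> m" "m < length ts" "k = leaf_offset ts m"
    using assms(2) by (auto simp: root_sectors_conv_leaf_offset)
  show "0 < k" using leaf_offset_strict_mono[OF assms(1), of 0 m] m by simp
  show "k < forest_leaves ts"
    using leaf_offset_strict_mono[OF assms(1) m(2)] m by (simp add: leaf_offset_def)
qed

lemma root_sectors_append:
  "xs \<noteq> [] \<Longrightarrow> root_sectors (xs @ ys) = root_sectors xs @ root_sectors (Node xs # ys)"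
  by (induction xs rule: induct_list012) (auto simp: add.assoc comp_def)

lemma root_sectors_cong: "map num_leaves xs = map num_leaves ys \<Longrightarrow> root_sectors xs = root_sectors ys"
proof (induction xs arbitrary: ys)
  case (Cons x xs)
  then show ?case by (cases ys) auto
qed simp

lemma filter_clear_view_root:
  assumes pos: "\<forall>t\<in>set ts. 0 < num_leaves t"
  shows "filter (clear_view (Node ts) []) [1..<forest_leaves ts] = root_sectors ts"
proof (rule strict_sorted_equal)
  show "sorted_wrt (<) (root_sectors ts)"
    unfolding root_sectors_conv_leaf_offset
    by (rule sorted_wrt_map_mono[OF sorted_wrt_upt]) (auto intro: leaf_offset_strict_mono[OF pos])
  show "set (filter (clear_view (Node ts) []) [1..<forest_leaves ts]) = set (root_sectors ts)"
  proof (intro set_eqI iffI)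
    fix k assume "k \<in> set (filter (clear_view (Node ts) []) [1..<forest_leaves ts])"
    then have k: "0 < k" "k < forest_leaves ts" "clear_view (Node ts) [] k" by auto
    from k(2) obtain i r where ir: "i < length ts" "r < num_leaves (ts ! i)"
        "k = leaf_offset ts i + r"
      by (rule leaf_offset_cover)
    then have r: "r = 0" using k clear_view_Node[OF ir k(1), of "[]"] by (auto split: if_splits)
    then have "i \<noteq> 0" using ir(3) k(1) by (intro notI) simp
    with r show "k \<in> set (root_sectors ts)"
      using ir by (auto simp: root_sectors_conv_leaf_offset)
  next
    fix k assume k: "k \<in> set (root_sectors ts)"
    then obtain m where m: "1 \<le> m" "m < length ts" "k = leaf_offset ts m"
      by (auto simp: root_sectors_conv_leaf_offset)
    have "0 < num_leaves (ts ! m)" using pos m by simp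
    then have "clear_view (Node ts) [] k"
      using clear_view_Node[OF m(2) _ _ root_sectors_bounds(1)[OF pos k], of 0] m by simp
    then show "k \<in> set (filter (clear_view (Node ts) []) [1..<forest_leaves ts])"
      using root_sectors_bounds[OF pos k] by simp
  qed
qed (simp add: sorted_wrt_filter)

lemma filter_clear_view_child:
  assumes c: "c < length ts"
  shows "filter (clear_view (Node ts) (c # p)) [1..<forest_leaves ts]
       = map ((+) (leaf_offset ts c)) (filter (clear_view (ts ! c) p) [1..<num_leaves (ts ! c)])"
proof (rule strict_sorted_equal)
  show "set (filter (clear_view (Node ts) (c # p)) [1..<forest_leaves ts])
      = set (map ((+) (leaf_offset ts c)) (filter (clear_view (ts ! c) p) [1..<num_leaves (ts ! c)]))"
  proof (intro set_eqI iffI)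
    fix k assume "k \<in> set (filter (clear_view (Node ts) (c # p)) [1..<forest_leaves ts])"
    then have k: "0 < k" "k < forest_leaves ts" "clear_view (Node ts) (c # p) k" by auto
    from k(2) obtain i r where ir: "i < length ts" "r < num_leaves (ts ! i)"
        "k = leaf_offset ts i + r"
      by (rule leaf_offset_cover)
    then show "k \<in> set (map ((+) (leaf_offset ts c)) (filter (clear_view (ts ! c) p) [1..<num_leaves (ts ! c)]))"
      using k clear_view_Node[OF ir k(1), of "c # p"] by (auto split: if_splits)
  next
    fix k assume "k \<in> set (map ((+) (leaf_offset ts c)) (filter (clear_view (ts ! c) p) [1..<num_leaves (ts ! c)]))"
    then obtain r where r: "0 < r" "r < num_leaves (ts ! c)" "clear_view (ts ! c) p r"
        "k = leaf_offset ts c + r"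
      by auto
    have "k < leaf_offset ts (Suc c)" using r c by (simp add: leaf_offset_Suc)
    then have "k < forest_leaves ts" using leaf_offset_le_forest_leaves order_less_le_trans by blast
    then show "k \<in> set (filter (clear_view (Node ts) (c # p)) [1..<forest_leaves ts])"
      using r clear_view_Node[OF c r(2) r(4)] by simp
  qed
qed (simp_all add: sorted_wrt_map sorted_wrt_filter)

section \<open>Products of moments\<close>

lemma internal_vertices_Leaf [simp]: "internal_vertices Leaf = {}"
  by (auto simp: internal_vertices_def elim: subtree_at.elims)

lemma internal_vertices_Node:
  "internal_vertices (Node ts) = insert [] (\<Union>i<length ts. Cons i ` internal_vertices (ts ! i))"
proof (intro set_eqI)
  fix v
  show "v \<in> internal_vertices (Node ts) \<longleftrightarrow> v \<in> insert [] (\<Union>i<length ts. Cons i ` internal_vertices (ts ! i))"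
    by (cases v) (auto simp: internal_vertices_def)
qed

lemma finite_internal_vertices [simp]: "finite (internal_vertices t)"
  by (induction t) (simp_all add: internal_vertices_Node)

definition tree_weight :: "('a::monoid_mult \<Rightarrow> 'b::comm_monoid_mult) \<Rightarrow> (nat \<Rightarrow> 'a) \<Rightarrow> ptree \<Rightarrow> 'b" where
  "tree_weight phi a t =
     (\<Prod>v\<in>internal_vertices t. phi (prod_list (map a (filter (clear_view t v) [1..<num_leaves t]))))"

fun forest_weight :: "('a::monoid_mult \<Rightarrow> 'b::comm_monoid_mult) \<Rightarrow> (nat \<Rightarrow> 'a) \<Rightarrow> ptree list \<Rightarrow> 'b" where
  "forest_weight phi a [] = 1"
| "forest_weight phi a (t # ts) = tree_weight phi a t * forest_weight phi (\<lambda>k. a (num_leaves t + k)) ts"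

lemma forest_weight_conv_prod:
  "forest_weight phi a ts = (\<Prod>c<length ts. tree_weight phi (\<lambda>r. a (leaf_offset ts c + r)) (ts ! c))"
  by (induction ts arbitrary: a) (simp_all add: prod.lessThan_Suc_shift add.assoc del: prod.lessThan_Suc)

lemma forest_weight_append:
  "forest_weight phi a (xs @ ys) = forest_weight phi a xs * forest_weight phi (\<lambda>k. a (forest_leaves xs + k)) ys"
  by (induction xs arbitrary: a) (simp_all add: add.assoc mult.assoc)

lemma tree_weight_Node:
  assumes "\<forall>t\<in>set ts. 0 < num_leaves t"
  shows "tree_weight phi a (Node ts) = phi (prod_list (map a (root_sectors ts))) * forest_weight phi a ts"
proof -
  define F where "F v = phi (prod_list (map a (filter (clear_view (Node ts) v) [1..<forest_leaves ts])))" for v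
  have "tree_weight phi a (Node ts) = F [] * (\<Prod>c<length ts. prod F (Cons c ` internal_vertices (ts ! c)))"
    unfolding tree_weight_def internal_vertices_Node F_def[symmetric] num_leaves.simps
    by (subst prod.insert) (auto intro!: arg_cong[where f = "(*) (F [])"] prod.UNION_disjoint)
  also have "(\<Prod>c<length ts. prod F (Cons c ` internal_vertices (ts ! c))) = forest_weight phi a ts"
    unfolding forest_weight_conv_prod
  proof (rule prod.cong[OF refl])
    fix c assume "c \<in> {..<length ts}"
    then show "prod F (Cons c ` internal_vertices (ts ! c)) = tree_weight phi (\<lambda>r. a (leaf_offset ts c + r)) (ts ! c)"
      using filter_clear_view_child[of c ts] by (simp add: prod.reindex tree_weight_def F_def comp_def)
  qed
  finally show ?thesis using filter_clear_view_root[OF assms] by (simp add: F_def)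
qed

lemma tree_weight_group:
  assumes cluster: "cluster_property phi B C"
    and B: "\<forall>k. 0 < k \<and> k \<le> j \<longrightarrow> a k \<in> B"
    and C: "\<forall>k. j < k \<and> k < forest_leaves (L @ s # R) \<longrightarrow> a k \<in> C"
    and nonempty: "L \<noteq> []" "R \<noteq> []"
    and j: "forest_leaves L \<le> j" "j < forest_leaves L + num_leaves s"
    and pos: "\<forall>t\<in>set (L @ s # R). 0 < num_leaves t"
  shows "tree_weight phi a (Node (L @ s # R)) = tree_weight phi a (Node (Node (L @ [s]) # R))"
proof -
  let ?left = "root_sectors (L @ [s])" and ?right = "root_sectors (Node (L @ [s]) # R)"
  have sectors: "root_sectors (L @ s # R) = ?left @ ?right"
    using root_sectors_append[of "L @ [s]" R] nonempty by simp
  have left: "?left = root_sectors L @ [forest_leaves L]"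
    using root_sectors_append[of L "[s]"] nonempty by simp
  have "0 < forest_leaves L" using forest_leaves_pos[of L] pos nonempty(1) by simp
  moreover have "0 < k \<and> k < forest_leaves L" if "k \<in> set (root_sectors L)" for k
    using root_sectors_bounds[of L k] pos that by simp
  ultimately have "\<forall>k\<in>set ?left. 0 < k \<and> k \<le> j"
    unfolding left using j by fastforce
  then have B_left: "set (map a ?left) \<subseteq> B" using B by (auto simp del: root_sectors.simps)
  have "\<forall>t\<in>set (Node (L @ [s]) # R). 0 < num_leaves t" using pos by auto
  then have "k < forest_leaves (L @ s # R)" if "k \<in> set ?right" for k
    using root_sectors_bounds(2)[OF _ that] by (simp add: add.assoc)
  moreover have "j < k" if "k \<in> set ?right" for k
    using that j nonempty(2) by (auto simp: neq_Nil_conv)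
  ultimately have C_right: "set (map a ?right) \<subseteq> C" using C by (auto simp del: root_sectors.simps)
  have "phi (prod_list (map a (root_sectors (L @ s # R))))
      = phi (prod_list (map a ?left)) * phi (prod_list (map a ?right))"
    using cluster B_left C_right unfolding sectors cluster_property_def
    by (simp del: root_sectors.simps)
  moreover have "forest_weight phi a (L @ s # R)
      = forest_weight phi a (L @ [s]) * forest_weight phi (\<lambda>k. a (forest_leaves (L @ [s]) + k)) R"
    using forest_weight_append[of phi a "L @ [s]" R] by simp
  moreover have "tree_weight phi a (Node (L @ [s])) = phi (prod_list (map a ?left)) * forest_weight phi a (L @ [s])"
    using pos by (simp add: tree_weight_Node del: root_sectors.simps)
  ultimately show ?thesis
    using pos by (simp add: tree_weight_Node mult_ac del: root_sectors.simps)
qed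

lemma tree_weight_sector_flip:
  assumes "cluster_property phi B C" "reduced t" "0 < j" "j < num_leaves t"
    and "\<forall>k. 0 < k \<and> k \<le> j \<longrightarrow> a k \<in> B" "\<forall>k. j < k \<and> k < num_leaves t \<longrightarrow> a k \<in> C"
  shows "tree_weight phi a (sector_flip j t) = tree_weight phi a t"
  using assms(2-)
proof (induction t arbitrary: j a)
  case (Node ts)
  have pos: "\<forall>t\<in>set ts. 0 < num_leaves t" using Node.prems(1) num_leaves_pos by auto
  from Node.prems(2,3) have "0 < j" "j < forest_leaves ts" by simp_all
  then show ?case
  proof (cases rule: sector_flip_Node_cases)
    case (group L s R)
    then show ?thesis using tree_weight_group[OF assms(1)] Node.prems pos
      by (simp add: sector_flip_group)
  next
    case (ungroup L s R)
    then have "L \<noteq> []" "\<forall>t\<in>set (L @ s # R). 0 < num_leaves t"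
      using Node.prems(1) num_leaves_pos by auto
    then show ?thesis using ungroup tree_weight_group[OF assms(1), of j a L s R] Node.prems
      by (simp add: sector_flip_ungroup add.assoc)
  next
    case (boundary L s)
    then show ?thesis by (simp add: sector_flip_boundary)
  next
    case (descend L s R j')
    let ?a = "\<lambda>k. a (forest_leaves L + k)"
    have s: "s \<in> set ts" "reduced s" using descend Node.prems(1) by auto
    have "tree_weight phi ?a (sector_flip j' s) = tree_weight phi ?a s"
      using Node.IH[OF s] descend Node.prems(4,5) by simp
    moreover have leaves: "num_leaves (sector_flip j' s) = num_leaves s"
      using descend num_leaves_sector_flip by simp
    moreover have "\<forall>t\<in>set (L @ sector_flip j' s # R). 0 < num_leaves t"
      using pos descend leaves by auto
    moreover have "root_sectors (L @ sector_flip j' s # R) = root_sectors ts"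
      using descend leaves by (intro root_sectors_cong) simp
    ultimately show ?thesis using descend pos sector_flip_descend[of j' s R L]
      by (simp add: tree_weight_Node forest_weight_append del: root_sectors.simps)
  qed
qed simp

section \<open>Cancellation in the cumulant\<close>

definition signed_tree_weight :: "('a::monoid_mult \<Rightarrow> 'b::comm_ring_1) \<Rightarrow> (nat \<Rightarrow> 'a) \<Rightarrow> ptree \<Rightarrow> 'b" where
  "signed_tree_weight phi a t = (-1) ^ (num_internal t - 1) * tree_weight phi a t"

lemma kappa_conv_signed_tree_weight:
  "kappa phi as = (\<Sum>t\<in>PST (length as). signed_tree_weight phi (\<lambda>i. as ! (i - 1)) t)"
  unfolding kappa_def Let_def
proof (rule sum.cong[OF refl])
  fix t assume "t \<in> PST (length as)"
  then have "num_leaves t = length as + 1" by (auto simp: PST_def weight_def prime_tree_def)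
  then show "(-1) ^ (num_internal t - 1) * (\<Prod>v\<in>internal_vertices t.
        phi (prod_list (map (\<lambda>i. as ! (i - 1)) (filter (clear_view t v) [1..<length as + 1]))))
      = signed_tree_weight phi (\<lambda>i. as ! (i - 1)) t"
    by (simp add: signed_tree_weight_def tree_weight_def)
qed

lemma signed_tree_weight_sector_flip:
  assumes "cluster_property phi B C" "t \<in> PST n" "0 < j" "j < n"
    and "\<forall>k. 0 < k \<and> k \<le> j \<longrightarrow> a k \<in> B" "\<forall>k. j < k \<and> k \<le> n \<longrightarrow> a k \<in> C"
  shows "signed_tree_weight phi a (sector_flip j t) + signed_tree_weight phi a t = 0"
proof -
  have t: "reduced t" "num_leaves t = Suc n" "t \<noteq> Leaf"
    using assms(2) by (auto simp: PST_def weight_def prime_tree_def)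
  have weight: "tree_weight phi a (sector_flip j t) = tree_weight phi a t"
    using tree_weight_sector_flip[OF assms(1) t(1) assms(3)] t assms(4-6) by simp
  have "sector_flip j t \<noteq> Leaf"
    using sector_flip_PST(1)[OF assms(2-4)] by (auto simp: PST_def prime_tree_def)
  moreover have "0 < num_internal u" if "u \<noteq> Leaf" for u
    using that by (cases u) auto
  ultimately obtain m m' where m: "num_internal t = Suc m" "num_internal (sector_flip j t) = Suc m'"
    using t(3) gr0_implies_Suc by metis
  then have "m' = Suc m \<or> m = Suc m'" using sector_flip_PST(3)[OF assms(2-4)] by auto
  then show ?thesis using weight m by (auto simp: signed_tree_weight_def)
qed

theorem mainTheorem6:
  fixes scale :: "complex \<Rightarrow> 'a::ring_1 \<Rightarrow> 'a" and phi :: "'a \<Rightarrow> complex"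
    and B C :: "'a set" and bs cs :: "'a list"
  assumes "nc_prob_space scale phi"
    and "cluster_property phi B C"
    and "length bs > 0" and "length cs > 0"
    and "set bs \<subseteq> B" and "set cs \<subseteq> C"
  shows "kappa phi (bs @ cs) = 0"
proof -
  let ?n = "length (bs @ cs)" and ?j = "length bs" and ?a = "\<lambda>i. (bs @ cs) ! (i - 1)"
  have j: "0 < ?j" "?j < ?n" using assms(3,4) by simp_all
  have B: "\<forall>k. 0 < k \<and> k \<le> ?j \<longrightarrow> ?a k \<in> B"
    using assms(5) by (auto simp: nth_append)
  have C: "\<forall>k. ?j < k \<and> k \<le> ?n \<longrightarrow> ?a k \<in> C"
    using assms(6) by (auto simp: nth_append)
  have "(\<Sum>t\<in>PST ?n. signed_tree_weight phi ?a t) = 0"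
  proof (rule sum_involution_eq_0[where h = "sector_flip ?j"])
    fix t assume t: "t \<in> PST ?n"
    show "signed_tree_weight phi ?a (sector_flip ?j t) + signed_tree_weight phi ?a t = 0"
      using signed_tree_weight_sector_flip[OF assms(2) t j B C] .
    show "sector_flip ?j t \<in> PST ?n" using sector_flip_PST(1)[OF t j] .
    show "sector_flip ?j (sector_flip ?j t) = t" using sector_flip_PST(2)[OF t j] .
    show "sector_flip ?j t \<noteq> t" using sector_flip_PST(3)[OF t j] by auto
  qed
  then show ?thesis by (simp add: kappa_conv_signed_tree_weight)
qed

end
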